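(* Let $C\subseteq\mathbb{R}^n$ be non-empty and compact and set $K:=C\times[0,\infty)\subseteq\mathbb{R}^{n+1}$, so that $K^\sharp=\{0\}\times[0,\infty)$. Let $s=(s_\alpha)_{\alpha\in\mathbb{N}_0^{n+1}}$ be a real sequence. Then the following are equivalent: (i) $D(s)$ is a $K$-positivity preserver; (ii) $s$ is a $K^\sharp$-moment sequence.
   Context: $D(s):=\sum_{\alpha}\frac{s_\alpha}{\alpha!}\partial^\alpha$ acting on the polynomial ring in the $n+1$ variables. A linear map $T$ is a $K$-positivity preserver if $T\,\mathrm{Pos}(K)\subseteq\mathrm{Pos}(K)$, with $\mathrm{Pos}(K)$ the polynomials non-negative on $K$. $K^\sharp:=\{x : x+K\subseteq K\}$. For closed $L$, $s$ is an $L$-moment sequence if there is a measure $\mu$ with $\mathrm{supp}\,\mu\subseteq L$ and $s_\alpha=\int x^\alpha\,\mathrm{d}\mu$ for all $\alpha$. *)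

theory Defs
  imports "HOL-Analysis.Analysis"
begin

text \<open>Polynomials in the finitely many variables indexed by a finite type 'v
  (for the theorem, 'v = 'n option, i.e. n+1 variables, None being the last one),
  represented by their coefficient functions on multi-indices 'v \<Rightarrow> nat.\<close>

definition mpoly :: "(('v::finite \<Rightarrow> nat) \<Rightarrow> real) \<Rightarrow> bool" where
  "mpoly c \<longleftrightarrow> finite {\<alpha>. c \<alpha> \<noteq> 0}"

definition monom_eval :: "('v::finite \<Rightarrow> nat) \<Rightarrow> real^'v \<Rightarrow> real" where
  "monom_eval \<alpha> x = (\<Prod>i\<in>UNIV. (x $ i) ^ \<alpha> i)"

definition meval :: "(('v::finite \<Rightarrow> nat) \<Rightarrow> real) \<Rightarrow> real^'v \<Rightarrow> real" where
  "meval c x = (\<Sum>\<alpha>\<in>{\<alpha>. c \<alpha> \<noteq> 0}. c \<alpha> * monom_eval \<alpha> x)"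

definition mfact :: "('v::finite \<Rightarrow> nat) \<Rightarrow> real" where
  "mfact \<alpha> = (\<Prod>i\<in>UNIV. fact (\<alpha> i))"

text \<open>The partial derivative operator applied to a polynomial (coefficientwise):
  the coefficient of x^beta in the alpha-th derivative of sum_gamma c_gamma x^gamma.\<close>
definition mpartial :: "('v::finite \<Rightarrow> nat) \<Rightarrow> (('v \<Rightarrow> nat) \<Rightarrow> real) \<Rightarrow> ('v \<Rightarrow> nat) \<Rightarrow> real" where
  "mpartial \<alpha> c \<beta> = c (\<lambda>i. \<alpha> i + \<beta> i) * (\<Prod>i\<in>UNIV. fact (\<alpha> i + \<beta> i) / fact (\<beta> i))"

text \<open>D(s) = sum_alpha s_alpha / alpha! partial^alpha; only the finitely many alpha
  below some exponent of the polynomial contribute.\<close>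
definition Dop :: "(('v::finite \<Rightarrow> nat) \<Rightarrow> real) \<Rightarrow> (('v \<Rightarrow> nat) \<Rightarrow> real) \<Rightarrow> ('v \<Rightarrow> nat) \<Rightarrow> real" where
  "Dop s c = (\<lambda>\<beta>. \<Sum>\<alpha>\<in>{\<alpha>. \<exists>\<gamma>. c \<gamma> \<noteq> 0 \<and> (\<forall>i. \<alpha> i \<le> \<gamma> i)}.
      s \<alpha> / mfact \<alpha> * mpartial \<alpha> c \<beta>)"

definition pos_preserver ::
  "(real^'v::finite) set \<Rightarrow> ((('v \<Rightarrow> nat) \<Rightarrow> real) \<Rightarrow> (('v \<Rightarrow> nat) \<Rightarrow> real)) \<Rightarrow> bool" where
  "pos_preserver K T \<longleftrightarrow>
     (\<forall>c. mpoly c \<and> (\<forall>x\<in>K. meval c x \<ge> 0) \<longrightarrow> (\<forall>x\<in>K. meval (T c) x \<ge> 0))"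

definition Ksharp :: "(real^'v::finite) set \<Rightarrow> (real^'v) set" where
  "Ksharp K = {x. (\<lambda>y. x + y) ` K \<subseteq> K}"

definition moment_seq :: "(real^'v::finite) set \<Rightarrow> (('v \<Rightarrow> nat) \<Rightarrow> real) \<Rightarrow> bool" where
  "moment_seq L s \<longleftrightarrow> (\<exists>\<mu> :: (real^'v) measure.
     sets \<mu> = sets borel \<and> emeasure \<mu> (UNIV - L) = 0 \<and>
     (\<forall>\<alpha>. integrable \<mu> (monom_eval \<alpha>) \<and> s \<alpha> = (\<integral>x. monom_eval \<alpha> x \<partial>\<mu>)))"

end

(*
  Taylor's formula gives D(s) p (x) = L_s (p (x + \<cdot>)), with L_s the Riesz functional of s.
  If s has a representing measure on K^sharp, this is the integral of p (x + y) over y in K^sharp,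
  and x + y lies in K, so D(s) preserves positivity on K.

  Conversely, positivity of D(s) at x in K says that L_s is nonnegative on polynomials that are
  nonnegative on K - x. Since a nonempty compact set admits no nonzero translation into itself,
  K^sharp = {0} \<times> [0, \<infinity>). At x = (c, 0) the polynomials in the last variable that are
  nonnegative on [0, \<infinity>) show that k \<mapsto> s_(0,k) is a Stieltjes moment sequence; its
  representing measure is constructed from atomic approximations via Helly's selection theorem.
  Every other moment vanishes: on K - x each coordinate x_j ranges over a bounded interval which
  may be taken on either side of 0, forcing L_s (x_j^2) = 0, and Cauchy-Schwarz for the positive
  functional L_s then kills all moments involving x_j. Pushing the Stieltjes measure forward to the
  ray K^sharp yields the representing measure of s.
*)

theory Submission
  imports Defs "HOL-Probability.Probability" "HOL-Library.Function_Algebras"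
begin

section \<open>The Stieltjes moment problem\<close>

definition halfline_positive :: "(nat \<Rightarrow> real) \<Rightarrow> bool" where
  "halfline_positive m \<longleftrightarrow>
     (\<forall>a D. (\<forall>t\<ge>0. 0 \<le> (\<Sum>k\<le>D. a k * t ^ k)) \<longrightarrow> 0 \<le> (\<Sum>k\<le>D. a k * m k))"

lemma halfline_positiveD:
  assumes "halfline_positive m" and "\<And>t. 0 \<le> t \<Longrightarrow> 0 \<le> (\<Sum>k\<le>D. a k * t ^ k)"
  shows "0 \<le> (\<Sum>k\<le>D. a k * m k)"
  using assms unfolding halfline_positive_def by blast

lemma cross_term_zero_if_quadratic_form_nonneg:
  fixes p q r :: real
  assumes "\<And>a b. 0 \<le> a\<^sup>2 * p + 2 * a * b * q + b\<^sup>2 * r" and "p = 0"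
  shows "q = 0"
proof (rule ccontr)
  assume "q \<noteq> 0"
  define a where "a = - (\<bar>r\<bar> + 1) / (2 * q)"
  have "2 * a * q = - (\<bar>r\<bar> + 1)"
    using \<open>q \<noteq> 0\<close> by (simp add: a_def)
  moreover have "0 \<le> 2 * a * q + r"
    using assms(1)[of a 1] \<open>p = 0\<close> by simp
  ultimately show False
    by linarith
qed

lemma halfline_positive_square:
  assumes "halfline_positive m"
  shows "0 \<le> a\<^sup>2 * m 0 + 2 * a * b * m k + b\<^sup>2 * m (2 * k)"
proof -
  define c where "c j = (if j = 0 then a\<^sup>2 else 0) + (if j = k then 2 * a * b else 0)
                        + (if j = 2 * k then b\<^sup>2 else 0)" for j
  have expand: "(\<Sum>j\<le>2 * k. c j * f j) = a\<^sup>2 * f 0 + 2 * a * b * f k + b\<^sup>2 * f (2 * k)"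
    for f :: "nat \<Rightarrow> real"
    by (simp add: c_def distrib_right sum.distrib if_distrib[of "\<lambda>x. x * _"] cong: if_cong)
  have "0 \<le> (\<Sum>j\<le>2 * k. c j * m j)"
  proof (rule halfline_positiveD[OF assms])
    fix t :: real
    have "(\<Sum>j\<le>2 * k. c j * t ^ j) = (a + b * t ^ k)\<^sup>2"
      unfolding expand by (simp add: power2_sum power_mult_distrib power_mult[symmetric] mult.commute)
    then show "0 \<le> (\<Sum>j\<le>2 * k. c j * t ^ j)"
      by simp
  qed
  then show ?thesis
    unfolding expand .
qed

lemma halfline_positive_eq_0:
  assumes "halfline_positive m" and "m 0 = 0"
  shows "m k = 0"
  using cross_term_zero_if_quadratic_form_nonneg[OF halfline_positive_square[OF assms(1)] assms(2)] .

lemma halfline_positive_nonneg: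
  assumes "halfline_positive m"
  shows "0 \<le> m 0"
  using halfline_positiveD[OF assms, where D=0 and a="\<lambda>_. 1"] by simp


definition atomic_moment :: "real set \<Rightarrow> (real \<Rightarrow> real) \<Rightarrow> nat \<Rightarrow> real" where
  "atomic_moment P w k = (\<Sum>t\<in>P. w t * t ^ k)"

definition halfline_atoms :: "real set \<Rightarrow> (real \<Rightarrow> real) \<Rightarrow> bool" where
  "halfline_atoms P w \<longleftrightarrow> finite P \<and> (\<forall>t\<in>P. 0 \<le> t \<and> 0 \<le> w t)"

definition moment_error :: "(nat \<Rightarrow> real) \<Rightarrow> nat \<Rightarrow> real set \<Rightarrow> (real \<Rightarrow> real) \<Rightarrow> real" where
  "moment_error m d P w = (\<Sum>k\<le>d. (atomic_moment P w k - m k)\<^sup>2)"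

lemma atomic_moment_add_atom:
  assumes "finite P"
  shows "atomic_moment (insert t P) (\<lambda>u. (if u \<in> P then w u else 0) + (if u = t then c else 0)) k
           = atomic_moment P w k + c * t ^ k"
proof -
  have "atomic_moment (insert t P) (\<lambda>u. (if u \<in> P then w u else 0) + (if u = t then c else 0)) k
      = (\<Sum>u\<in>insert t P. if u \<in> P then w u * u ^ k else 0) + (\<Sum>u\<in>insert t P. if u = t then c * t ^ k else 0)"
    unfolding atomic_moment_def sum.distrib[symmetric] by (intro sum.cong) (auto simp: distrib_right)
  also have "\<dots> = atomic_moment P w k + c * t ^ k"
    using assms by (simp add: atomic_moment_def sum.If_cases Int_absorb1 subset_insertI)
  finally show ?thesis .
qed

lemma atomic_moment_scale: "atomic_moment P (\<lambda>u. c * w u) k = c * atomic_moment P w k"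
  by (simp add: atomic_moment_def sum_distrib_left mult.assoc)

lemma sum_square_shift:
  fixes r g :: "'a \<Rightarrow> real"
  shows "(\<Sum>k\<in>A. (r k + c * g k)\<^sup>2)
           = (\<Sum>k\<in>A. (r k)\<^sup>2) + 2 * c * (\<Sum>k\<in>A. r k * g k) + c\<^sup>2 * (\<Sum>k\<in>A. (g k)\<^sup>2)"
  by (simp add: power2_sum sum.distrib sum_distrib_left algebra_simps power_mult_distrib)

lemma sum_square_powers_le:
  fixes t :: real
  assumes "0 \<le> t"
  shows "1 + (\<Sum>k\<le>d. (t ^ k)\<^sup>2) \<le> 2 * (\<Sum>k\<le>2 * d. t ^ k)"
proof -
  have "(\<Sum>k\<le>d. (t ^ k)\<^sup>2) = (\<Sum>k\<in>(\<lambda>k. 2 * k) ` {..d}. t ^ k)"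
    by (subst sum.reindex) (auto simp: inj_on_def power_mult[symmetric] mult.commute)
  also have "\<dots> \<le> (\<Sum>k\<le>2 * d. t ^ k)"
    by (rule sum_mono2) (use assms in auto)
  finally have "(\<Sum>k\<le>d. (t ^ k)\<^sup>2) \<le> (\<Sum>k\<le>2 * d. t ^ k)" .
  moreover have "t ^ 0 \<le> (\<Sum>k\<le>2 * d. t ^ k)"
    by (rule member_le_sum) (use assms in auto)
  ultimately show ?thesis
    by simp
qed

lemma sum_atMost_restrict:
  fixes d D :: nat
  assumes "d \<le> D"
  shows "(\<Sum>k\<le>D. (if k \<le> d then g k else 0)) = (\<Sum>k\<le>d. g k)"
proof -
  have "{k\<in>{..D}. k \<le> d} = {..d}"
    using assms by auto
  then show ?thesis
    using sum.inter_filter[of "{..D}" g "\<lambda>k. k \<le> d"] by simp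
qed

text \<open>The atomic approximation below is a nearest-point argument for the cone of truncated
  moment vectors of atomic measures on \<open>[0, \<infinity>)\<close>; as that cone need not be closed we work with an
  approximate minimiser of the squared distance to \<open>m\<close>.\<close>

locale near_minimizer =
  fixes m :: "nat \<Rightarrow> real" and d :: nat and \<eta> :: real and P :: "real set" and w :: "real \<Rightarrow> real"
  assumes positive: "halfline_positive m"
    and eta_pos: "0 < \<eta>" and eta_le: "\<eta> \<le> 1/2"
    and atoms: "halfline_atoms P w"
    and near_min: "\<And>P' w'. halfline_atoms P' w' \<Longrightarrow>
                     moment_error m d P w < moment_error m d P' w' + \<eta>\<^sup>2"
begin

abbreviation residual :: "nat \<Rightarrow> real" where
  "residual k \<equiv> atomic_moment P w k - m k"

lemma perturbation_bound:
  assumes "halfline_atoms P' w'" and "\<And>k. atomic_moment P' w' k = atomic_moment P w k + c * g k"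
  shows "- (\<eta>\<^sup>2) < 2 * c * (\<Sum>k\<le>d. residual k * g k) + c\<^sup>2 * (\<Sum>k\<le>d. (g k)\<^sup>2)"
proof -
  have "moment_error m d P' w'
          = moment_error m d P w + 2 * c * (\<Sum>k\<le>d. residual k * g k) + c\<^sup>2 * (\<Sum>k\<le>d. (g k)\<^sup>2)"
    unfolding moment_error_def assms(2) using sum_square_shift[of residual c g "{..d}"]
    by (simp add: algebra_simps)
  then show ?thesis
    using near_min[OF assms(1)] by simp
qed

text \<open>The second-order term of adding an atom at \<open>t\<close> is \<open>\<eta>\<^sup>2 \<Sum>\<^sub>k (t\<^sup>k)\<^sup>2\<close>; it is absorbed
  by \<open>\<eta> \<Sum>\<^sub>k\<^sub>\<le>\<^sub>2\<^sub>d t\<^sup>k\<close>, which is why positivity is used up to degree \<open>2 d\<close>.\<close>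

lemma add_atom_bound:
  assumes "0 \<le> t"
  shows "0 \<le> (\<Sum>k\<le>d. residual k * t ^ k) + \<eta> * (\<Sum>k\<le>2 * d. t ^ k)"
proof -
  have fin: "finite P"
    using atoms by (simp add: halfline_atoms_def)
  have "halfline_atoms (insert t P) (\<lambda>u. (if u \<in> P then w u else 0) + (if u = t then \<eta> else 0))"
    using atoms assms eta_pos by (auto simp: halfline_atoms_def)
  from perturbation_bound[OF this atomic_moment_add_atom[OF fin]]
  have "0 < 2 * \<eta> * (\<Sum>k\<le>d. residual k * t ^ k) + \<eta>\<^sup>2 * (1 + (\<Sum>k\<le>d. (t ^ k)\<^sup>2))"
    by (simp add: algebra_simps)
  also have "\<dots> \<le> 2 * \<eta> * (\<Sum>k\<le>d. residual k * t ^ k) + \<eta>\<^sup>2 * (2 * (\<Sum>k\<le>2 * d. t ^ k))"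
    using sum_square_powers_le[OF assms] by (intro add_left_mono mult_left_mono) auto
  also have "\<dots> = 2 * \<eta> * ((\<Sum>k\<le>d. residual k * t ^ k) + \<eta> * (\<Sum>k\<le>2 * d. t ^ k))"
    by (simp add: algebra_simps power2_eq_square)
  finally show ?thesis
    using eta_pos by (simp add: zero_less_mult_iff)
qed

lemma residual_moment_bound: "0 \<le> (\<Sum>k\<le>d. residual k * m k) + \<eta> * (\<Sum>k\<le>2 * d. m k)"
proof -
  define a where "a k = (if k \<le> d then residual k else 0) + \<eta>" for k
  have expand: "(\<Sum>k\<le>2 * d. a k * f k) = (\<Sum>k\<le>d. residual k * f k) + \<eta> * (\<Sum>k\<le>2 * d. f k)"
    for f :: "nat \<Rightarrow> real"
    using sum_atMost_restrict[of d "2 * d" "\<lambda>k. residual k * f k"]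
    by (simp add: a_def distrib_right sum.distrib sum_distrib_left if_distrib[of "\<lambda>x. x * _"] cong: if_cong)
  have "0 \<le> (\<Sum>k\<le>2 * d. a k * m k)"
    by (rule halfline_positiveD[OF positive]) (use add_atom_bound in \<open>simp add: expand\<close>)
  then show ?thesis
    by (simp add: expand)
qed

lemma residual_scale_bound:
  "\<bar>\<Sum>k\<le>d. residual k * atomic_moment P w k\<bar> \<le> \<eta> * (1 + (\<Sum>k\<le>d. (atomic_moment P w k)\<^sup>2)) / 2"
proof -
  have scaled: "- (\<eta>\<^sup>2) < 2 * c * (\<Sum>k\<le>d. residual k * atomic_moment P w k)
                              + c\<^sup>2 * (\<Sum>k\<le>d. (atomic_moment P w k)\<^sup>2)"
    if "\<bar>c\<bar> \<le> 1/2" for c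
  proof (rule perturbation_bound)
    show "halfline_atoms P (\<lambda>u. (1 + c) * w u)"
      using atoms that by (auto simp: halfline_atoms_def)
  qed (simp only: atomic_moment_scale, simp add: algebra_simps)
  have "0 < \<eta> * (2 * (\<Sum>k\<le>d. residual k * atomic_moment P w k)
                  + \<eta> * (1 + (\<Sum>k\<le>d. (atomic_moment P w k)\<^sup>2)))"
    using scaled[of \<eta>] eta_pos eta_le by (simp add: algebra_simps power2_eq_square)
  moreover have "0 < \<eta> * (- 2 * (\<Sum>k\<le>d. residual k * atomic_moment P w k)
                  + \<eta> * (1 + (\<Sum>k\<le>d. (atomic_moment P w k)\<^sup>2)))"
    using scaled[of "- \<eta>"] eta_pos eta_le by (simp add: algebra_simps power2_eq_square)
  ultimately show ?thesis
    using eta_pos by (simp add: zero_less_mult_iff abs_le_iff)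
qed

lemma moment_error_bound:
  "moment_error m d P w \<le> 2 * \<eta> * (1/2 + (\<Sum>k\<le>d. (m k)\<^sup>2) + \<bar>\<Sum>k\<le>2 * d. m k\<bar>)"
proof -
  let ?\<Phi> = "moment_error m d P w" and ?v = "atomic_moment P w"
  have \<Phi>: "?\<Phi> = (\<Sum>k\<le>d. (residual k)\<^sup>2)"
    by (simp add: moment_error_def)
  have split: "?\<Phi> = (\<Sum>k\<le>d. residual k * ?v k) - (\<Sum>k\<le>d. residual k * m k)"
    unfolding \<Phi> sum_subtractf[symmetric] by (intro sum.cong) (simp_all add: power2_eq_square algebra_simps)
  have square_sum_le: "(a + b)\<^sup>2 \<le> 2 * a\<^sup>2 + 2 * b\<^sup>2" for a b :: real
    using zero_le_power2[of "a - b"] unfolding power2_diff power2_sum by linarith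
  have "(\<Sum>k\<le>d. (?v k)\<^sup>2) \<le> (\<Sum>k\<le>d. 2 * (residual k)\<^sup>2 + 2 * (m k)\<^sup>2)"
  proof (rule sum_mono)
    fix k
    show "(?v k)\<^sup>2 \<le> 2 * (residual k)\<^sup>2 + 2 * (m k)\<^sup>2"
      using square_sum_le[of "residual k" "m k"] by simp
  qed
  then have v2: "(\<Sum>k\<le>d. (?v k)\<^sup>2) \<le> 2 * ?\<Phi> + 2 * (\<Sum>k\<le>d. (m k)\<^sup>2)"
    unfolding \<Phi> by (simp add: sum.distrib sum_distrib_left)
  have "- (\<Sum>k\<le>d. residual k * m k) \<le> \<eta> * \<bar>\<Sum>k\<le>2 * d. m k\<bar>"
    using residual_moment_bound mult_left_mono[OF abs_ge_self[of "\<Sum>k\<le>2 * d. m k"] less_imp_le[OF eta_pos]]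
    by linarith
  moreover have "\<eta> * (1 + (\<Sum>k\<le>d. (?v k)\<^sup>2)) / 2 \<le> \<eta> * (1 + (2 * ?\<Phi> + 2 * (\<Sum>k\<le>d. (m k)\<^sup>2))) / 2"
    using v2 eta_pos by (intro divide_right_mono mult_left_mono) auto
  ultimately have "?\<Phi> \<le> \<eta> * (1 + (2 * ?\<Phi> + 2 * (\<Sum>k\<le>d. (m k)\<^sup>2))) / 2 + \<eta> * \<bar>\<Sum>k\<le>2 * d. m k\<bar>"
    using split residual_scale_bound by linarith
  then have "?\<Phi> * (1 - \<eta>) \<le> \<eta> * (1/2 + (\<Sum>k\<le>d. (m k)\<^sup>2) + \<bar>\<Sum>k\<le>2 * d. m k\<bar>)"
    by (simp add: field_simps)
  moreover have "?\<Phi> * (1/2) \<le> ?\<Phi> * (1 - \<eta>)"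
    using eta_le \<Phi> by (intro mult_left_mono) (auto intro!: sum_nonneg)
  ultimately show ?thesis
    by linarith
qed

end

lemma halfline_positive_atomic_approx:
  assumes "halfline_positive m" and "0 < \<epsilon>"
  obtains P w where "halfline_atoms P w" and "\<And>k. k \<le> d \<Longrightarrow> \<bar>atomic_moment P w k - m k\<bar> \<le> \<epsilon>"
proof -
  define A where "A = 1/2 + (\<Sum>k\<le>d. (m k)\<^sup>2) + \<bar>\<Sum>k\<le>2 * d. m k\<bar>"
  have "0 < A"
    unfolding A_def by (auto intro!: add_pos_nonneg sum_nonneg)
  define \<eta> where "\<eta> = min (1/2) (\<epsilon>\<^sup>2 / (2 * A))"
  have \<eta>: "0 < \<eta>" "\<eta> \<le> 1/2" "2 * \<eta> * A \<le> \<epsilon>\<^sup>2"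
    using \<open>0 < A\<close> \<open>0 < \<epsilon>\<close> by (auto simp: \<eta>_def min_def field_simps)
  define S where "S = {moment_error m d P w | P w. halfline_atoms P w}"
  have "{} \<in> {P. \<exists>w. halfline_atoms P w}"
    by (auto simp: halfline_atoms_def)
  then have "S \<noteq> {}"
    unfolding S_def by blast
  have "bdd_below S"
    unfolding S_def moment_error_def by (auto intro!: bdd_belowI[of _ 0] sum_nonneg)
  obtain P w where Pw: "halfline_atoms P w" "moment_error m d P w < Inf S + \<eta>\<^sup>2"
    using cInf_lessD[OF \<open>S \<noteq> {}\<close>, of "Inf S + \<eta>\<^sup>2"] \<eta>(1) unfolding S_def by auto
  interpret near_minimizer m d \<eta> P w
  proof
    fix P' w' assume "halfline_atoms P' w'"
    then have "Inf S \<le> moment_error m d P' w'"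
      by (intro cInf_lower \<open>bdd_below S\<close>) (auto simp: S_def)
    then show "moment_error m d P w < moment_error m d P' w' + \<eta>\<^sup>2"
      using Pw(2) by simp
  qed (use assms \<eta> Pw(1) in auto)
  have error: "moment_error m d P w \<le> \<epsilon>\<^sup>2"
    using moment_error_bound \<eta>(3) unfolding A_def by linarith
  show ?thesis
  proof (rule that[OF Pw(1)])
    fix k assume "k \<le> d"
    then have "(residual k)\<^sup>2 \<le> moment_error m d P w"
      unfolding moment_error_def by (intro member_le_sum) auto
    then have "(residual k)\<^sup>2 \<le> \<epsilon>\<^sup>2"
      using error by linarith
    then show "\<bar>residual k\<bar> \<le> \<epsilon>"
      using \<open>0 < \<epsilon>\<close> by (metis abs_le_square_iff abs_of_pos)
  qed
qed

lemma atomic_distribution: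
  assumes "halfline_atoms P w" and "0 < atomic_moment P w 0"
  obtains \<mu> where "real_distribution \<mu>" and "AE t in \<mu>. 0 \<le> t"
    and "\<And>k. integrable \<mu> (\<lambda>t. t ^ k)"
    and "\<And>k. (\<integral>t. t ^ k \<partial>\<mu>) = atomic_moment P w k / atomic_moment P w 0"
proof -
  define W where "W = atomic_moment P w 0"
  have fin: "finite P" and nonneg: "\<And>t. t \<in> P \<Longrightarrow> 0 \<le> t \<and> 0 \<le> w t"
    using assms(1) by (auto simp: halfline_atoms_def)
  define g where "g t = (if t \<in> P then w t / W else 0)" for t
  have g_nonneg: "0 \<le> g t" for t
    using nonneg assms(2) by (auto simp: g_def W_def)
  have "(\<integral>\<^sup>+t. ennreal (g t) \<partial>count_space UNIV) = (\<Sum>t\<in>P. ennreal (g t))"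
    by (rule nn_integral_count_space') (use fin in \<open>auto simp: g_def\<close>)
  also have "\<dots> = ennreal (\<Sum>t\<in>P. g t)"
    using g_nonneg by (simp add: sum_ennreal)
  also have "(\<Sum>t\<in>P. g t) = 1"
    using assms(2) by (simp add: g_def W_def atomic_moment_def flip: sum_divide_distrib)
  finally have total: "(\<integral>\<^sup>+t. ennreal (g t) \<partial>count_space UNIV) = 1"
    by simp
  define q where "q = embed_pmf g"
  have pmf_q: "pmf q t = g t" for t
    unfolding q_def by (rule pmf_embed_pmf[OF g_nonneg total])
  have set_q: "set_pmf q \<subseteq> P"
    using pmf_q by (auto simp: set_pmf_eq g_def)
  define \<mu> where "\<mu> = distr (measure_pmf q) borel (\<lambda>t. t)"
  show ?thesis
  proof (rule that)
    show "real_distribution \<mu>"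
      unfolding \<mu>_def real_distribution_def real_distribution_axioms_def
      by (auto intro!: prob_space.prob_space_distr prob_space_measure_pmf)
    show "AE t in \<mu>. 0 \<le> t"
      unfolding \<mu>_def using set_q nonneg by (subst AE_distr_iff) (auto simp: AE_measure_pmf_iff)
    fix k
    show "integrable \<mu> (\<lambda>t. t ^ k)"
      unfolding \<mu>_def using finite_subset[OF set_q fin]
      by (subst integrable_distr_eq) (auto intro!: integrable_measure_pmf_finite)
    have "(\<integral>t. t ^ k \<partial>\<mu>) = (\<integral>t. t ^ k \<partial>measure_pmf q)"
      unfolding \<mu>_def by (subst integral_distr) auto
    also have "\<dots> = (\<Sum>t\<in>P. t ^ k * pmf q t)"
      by (rule integral_measure_pmf_real) (use fin set_q in auto)
    also have "\<dots> = atomic_moment P w k / W"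
      by (simp add: pmf_q g_def atomic_moment_def sum_divide_distrib mult.commute)
    finally show "(\<integral>t. t ^ k \<partial>\<mu>) = atomic_moment P w k / atomic_moment P w 0"
      by (simp add: W_def)
  qed
qed

lemma halfline_positive_approx_distributions:
  assumes "halfline_positive m" and "m 0 = 1"
  obtains \<mu> :: "nat \<Rightarrow> real measure"
  where "\<And>N. real_distribution (\<mu> N)" and "\<And>N. AE t in \<mu> N. 0 \<le> t"
    and "\<And>N k. integrable (\<mu> N) (\<lambda>t. t ^ k)"
    and "\<And>k. (\<lambda>N. \<integral>t. t ^ k \<partial>\<mu> N) \<longlonglongrightarrow> m k"
proof -
  define \<epsilon> :: "nat \<Rightarrow> real" where "\<epsilon> N = inverse (real (Suc N)) / 2" for N
  have "\<exists>P w. halfline_atoms P w \<and> (\<forall>k\<le>N. \<bar>atomic_moment P w k - m k\<bar> \<le> \<epsilon> N)" for N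
    by (rule halfline_positive_atomic_approx[OF assms(1), of "\<epsilon> N" N]) (auto simp: \<epsilon>_def)
  then obtain P w where atoms: "\<And>N. halfline_atoms (P N) (w N)"
    and approx: "\<And>N k. k \<le> N \<Longrightarrow> \<bar>atomic_moment (P N) (w N) k - m k\<bar> \<le> \<epsilon> N"
    by metis
  have moment_lim: "(\<lambda>N. atomic_moment (P N) (w N) k) \<longlonglongrightarrow> m k" for k
  proof -
    have "\<forall>\<^sub>F N in sequentially. norm (atomic_moment (P N) (w N) k - m k) \<le> \<epsilon> N"
      using approx[of k] by (auto simp: eventually_sequentially)
    moreover have "\<epsilon> \<longlonglongrightarrow> 0"
      unfolding \<epsilon>_def using tendsto_divide_zero[OF LIMSEQ_inverse_real_of_nat] by simp
    ultimately have "(\<lambda>N. atomic_moment (P N) (w N) k - m k) \<longlonglongrightarrow> 0"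
      by (rule Lim_null_comparison)
    then show ?thesis
      by (simp add: LIM_zero_iff)
  qed
  have "0 < atomic_moment (P N) (w N) 0" for N
  proof -
    have "\<epsilon> N \<le> 1/2"
      by (simp add: \<epsilon>_def field_simps)
    then show ?thesis
      using approx[of 0 N] assms(2) by (simp add: abs_le_iff)
  qed
  then have "\<exists>\<mu>. real_distribution \<mu> \<and> (AE t in \<mu>. 0 \<le> t) \<and> (\<forall>k. integrable \<mu> (\<lambda>t. t ^ k)) \<and>
              (\<forall>k. (\<integral>t. t ^ k \<partial>\<mu>) = atomic_moment (P N) (w N) k / atomic_moment (P N) (w N) 0)" for N
    by (metis atomic_distribution[OF atoms])
  then obtain \<mu> where \<mu>: "\<And>N. real_distribution (\<mu> N)" "\<And>N. AE t in \<mu> N. 0 \<le> t"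
    "\<And>N k. integrable (\<mu> N) (\<lambda>t. t ^ k)"
    "\<And>N k. (\<integral>t. t ^ k \<partial>\<mu> N) = atomic_moment (P N) (w N) k / atomic_moment (P N) (w N) 0"
    by metis
  show ?thesis
  proof (rule that[OF \<mu>(1-3)])
    show "(\<lambda>N. \<integral>t. t ^ k \<partial>\<mu> N) \<longlonglongrightarrow> m k" for k
      using tendsto_divide[OF moment_lim[of k] moment_lim[of 0]] assms(2) by (simp add: \<mu>(4))
  qed
qed

lemma tight_if_bounded_second_moments:
  assumes "\<And>N. real_distribution (\<mu> N)" and "\<And>N. integrable (\<mu> N) (\<lambda>t. t\<^sup>2)"
    and "\<And>N. (\<integral>t. t\<^sup>2 \<partial>\<mu> N) \<le> B"
  shows "tight \<mu>"
  unfolding tight_def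
proof (intro conjI allI impI assms(1))
  fix \<epsilon> :: real assume "0 < \<epsilon>"
  define b where "b = sqrt (\<bar>B\<bar> / \<epsilon>) + 1"
  have "0 \<le> sqrt (\<bar>B\<bar> / \<epsilon>)"
    using \<open>0 < \<epsilon>\<close> by simp
  then have "0 < b"
    unfolding b_def by linarith
  have "\<bar>B\<bar> / \<epsilon> < b\<^sup>2"
    using \<open>0 < \<epsilon>\<close> \<open>0 \<le> sqrt (\<bar>B\<bar> / \<epsilon>)\<close> power_strict_mono[of "sqrt (\<bar>B\<bar> / \<epsilon>)" b 2]
    by (auto simp: b_def)
  then have "B < \<epsilon> * b\<^sup>2"
    using \<open>0 < \<epsilon>\<close> by (simp add: field_simps)
  then have "B / b\<^sup>2 < \<epsilon>"
    using \<open>0 < b\<close> by (simp add: pos_divide_less_eq)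
  have "1 - \<epsilon> < measure (\<mu> N) {-b<..b}" for N
  proof -
    interpret real_distribution "\<mu> N"
      by (rule assms(1))
    have indicator_bound: "1 - t\<^sup>2 / b\<^sup>2 \<le> indicator {-b<..b} t" for t
    proof (cases "t \<in> {-b<..b}")
      case False
      then have "b\<^sup>2 \<le> t\<^sup>2"
        using \<open>0 < b\<close> by (auto simp: abs_le_square_iff[symmetric] abs_real_def)
      then show ?thesis
        using False \<open>0 < b\<close> by (simp add: field_simps)
    qed (use \<open>0 < b\<close> in simp)
    have "1 - \<epsilon> < 1 - B / b\<^sup>2"
      using \<open>B / b\<^sup>2 < \<epsilon>\<close> by simp
    also have "\<dots> \<le> 1 - (\<integral>t. t\<^sup>2 \<partial>\<mu> N) / b\<^sup>2"
      using assms(3)[of N] \<open>0 < b\<close> by (simp add: divide_right_mono)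
    also have "\<dots> = (\<integral>t. 1 - t\<^sup>2 / b\<^sup>2 \<partial>\<mu> N)"
      using assms(2) by (simp add: prob_space[unfolded space_eq_univ])
    also have "\<dots> \<le> (\<integral>t. indicator {-b<..b} t \<partial>\<mu> N)"
      using assms(2) indicator_bound
      by (intro integral_mono) (auto intro!: integrable_real_indicator simp: less_top[symmetric])
    also have "\<dots> = measure (\<mu> N) {-b<..b}"
      by simp
    finally show ?thesis .
  qed
  then show "\<exists>a b::real. a < b \<and> (\<forall>n. 1 - \<epsilon> < measure (\<mu> n) {a<..b})"
    using \<open>0 < b\<close> by (intro exI[of _ "-b"] exI[of _ b]) auto
qed

lemma weak_conv_AE_nonneg:
  assumes "\<And>n. real_distribution (\<mu> n)" and "real_distribution M" and "weak_conv_m \<mu> M"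
    and "\<And>n. AE t in \<mu> n. 0 \<le> t"
  shows "AE t in M. 0 \<le> t"
proof -
  interpret M: real_distribution M
    by fact
  define f where "f t = min 1 (max 0 (- t))" for t :: real
  have "(\<lambda>n. \<integral>t. f t \<partial>\<mu> n) \<longlonglongrightarrow> (\<integral>t. f t \<partial>M)"
    using assms(1-3)
    by (rule weak_conv_imp_integral_bdd_continuous_conv[where B = 1]) (auto simp: f_def intro!: continuous_intros)
  moreover have "(\<integral>t. f t \<partial>\<mu> n) = 0" for n
    using assms(4)[of n] by (intro integral_eq_zero_AE) (auto simp: f_def elim!: eventually_mono)
  ultimately have "(\<integral>t. f t \<partial>M) = 0"
    using LIMSEQ_unique[OF tendsto_const] by fastforce
  moreover have "integrable M f"
    unfolding f_def by (rule M.integrable_const_bound[where B = 1]) (auto, measurable)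
  ultimately have "AE t in M. f t = 0"
    by (subst (asm) integral_nonneg_eq_0_iff_AE) (auto simp: f_def)
  then show ?thesis
    by (rule eventually_mono) (auto simp: f_def)
qed

definition truncated_power :: "real \<Rightarrow> nat \<Rightarrow> real \<Rightarrow> real" where
  "truncated_power R k t = (min R (max t 0)) ^ k"

lemma isCont_truncated_power: "isCont (truncated_power R k) t"
  unfolding truncated_power_def by (intro continuous_intros)

lemma norm_truncated_power_le: "0 \<le> R \<Longrightarrow> norm (truncated_power R k t) \<le> R ^ k"
  unfolding truncated_power_def by (auto intro!: power_mono simp: abs_if)

lemma integrable_truncated_power:
  assumes "real_distribution N" and "0 \<le> R"
  shows "integrable N (truncated_power R k)"
proof -
  interpret real_distribution N
    by fact
  show ?thesis
  proof (rule integrable_const_bound[where B = "R ^ k"])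
    show "AE t in N. norm (truncated_power R k t) \<le> R ^ k"
      using norm_truncated_power_le[OF assms(2)] by simp
    show "truncated_power R k \<in> borel_measurable N"
      unfolding truncated_power_def by measurable
  qed
qed

lemma truncated_power_eq: "0 \<le> t \<Longrightarrow> t \<le> R \<Longrightarrow> truncated_power R k t = t ^ k"
  by (simp add: truncated_power_def)

lemma truncated_power_mono:
  "0 \<le> R \<Longrightarrow> R \<le> R' \<Longrightarrow> truncated_power R k t \<le> truncated_power R' k t"
  unfolding truncated_power_def by (intro power_mono) auto

lemma truncated_power_error:
  fixes t R :: real
  assumes "0 < R" and "0 \<le> t"
  shows "\<bar>truncated_power R k t - t ^ k\<bar> \<le> t ^ Suc k / R"
proof (cases "t \<le> R")
  case True
  then show ?thesis
    using assms by (simp add: truncated_power_eq)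
next
  case False
  have "t ^ k * R \<le> t ^ k * t"
    using False assms by (intro mult_left_mono) auto
  then have "t ^ k \<le> t ^ Suc k / R"
    using assms by (simp add: pos_le_divide_eq mult.commute)
  moreover have "R ^ k \<le> t ^ k"
    using False assms by (intro power_mono) auto
  moreover have "0 \<le> R ^ k"
    using assms by simp
  moreover have "truncated_power R k t = R ^ k"
    using False assms by (simp add: truncated_power_def)
  ultimately show ?thesis
    unfolding abs_le_iff by linarith
qed

lemma integral_truncated_power_error:
  assumes N: "real_distribution N" and nonneg: "AE t in N. 0 \<le> t"
    and integrable: "\<And>j. integrable N (\<lambda>t. t ^ j)" and "0 < R"
  shows "\<bar>(\<integral>t. truncated_power R k t \<partial>N) - (\<integral>t. t ^ k \<partial>N)\<bar> \<le> (\<integral>t. t ^ Suc k \<partial>N) / R"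
proof -
  have trunc: "integrable N (truncated_power R k)"
    using integrable_truncated_power[OF N] \<open>0 < R\<close> by simp
  have "\<bar>(\<integral>t. truncated_power R k t \<partial>N) - (\<integral>t. t ^ k \<partial>N)\<bar>
          = \<bar>\<integral>t. truncated_power R k t - t ^ k \<partial>N\<bar>"
    using trunc integrable by simp
  also have "\<dots> \<le> (\<integral>t. \<bar>truncated_power R k t - t ^ k\<bar> \<partial>N)"
    by (rule integral_abs_bound)
  also have "\<dots> \<le> (\<integral>t. t ^ Suc k / R \<partial>N)"
  proof (rule integral_mono_AE)
    show "integrable N (\<lambda>t. \<bar>truncated_power R k t - t ^ k\<bar>)"
      using trunc integrable by auto
    show "integrable N (\<lambda>t. t ^ Suc k / R)"
      by (intro integrable_divide_zero integrable)
    show "AE t in N. \<bar>truncated_power R k t - t ^ k\<bar> \<le> t ^ Suc k / R"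
      using nonneg by (rule eventually_mono) (rule truncated_power_error[OF \<open>0 < R\<close>])
  qed
  finally show ?thesis
    by simp
qed

lemma truncated_power_monotone_convergence:
  assumes M: "real_distribution M" and nonneg: "AE t in M. 0 \<le> t"
    and lim: "(\<lambda>j. \<integral>t. truncated_power (real (Suc j)) k t \<partial>M) \<longlonglongrightarrow> L"
  shows "integrable M (\<lambda>t. t ^ k)" and "(\<integral>t. t ^ k \<partial>M) = L"
proof -
  interpret M: real_distribution M
    by (rule M)
  define f where "f j = truncated_power (real (Suc j)) k" for j
  have f_integrable: "integrable M (f j)" for j
    unfolding f_def by (rule integrable_truncated_power[OF M]) simp
  have mono: "AE t in M. mono (\<lambda>j. f j t)"
    by (intro AE_I2 monoI) (auto simp: f_def intro!: truncated_power_mono)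
  have pointwise: "AE t in M. (\<lambda>j. f j t) \<longlonglongrightarrow> t ^ k"
    using nonneg
  proof (rule eventually_mono)
    fix t :: real assume "0 \<le> t"
    obtain N where "t \<le> real N"
      using real_arch_simple by blast
    then have "\<forall>j\<ge>N. f j t = t ^ k"
      using \<open>0 \<le> t\<close> by (auto simp: f_def truncated_power_eq)
    then show "(\<lambda>j. f j t) \<longlonglongrightarrow> t ^ k"
      by (intro tendsto_eventually) (auto simp: eventually_sequentially)
  qed
  have lim_f: "(\<lambda>j. integral\<^sup>L M (f j)) \<longlonglongrightarrow> L"
    using lim by (simp add: f_def)
  have measurable: "(\<lambda>t. t ^ k) \<in> borel_measurable M"
    by measurable
  show "integrable M (\<lambda>t. t ^ k)"
    by (rule integrable_monotone_convergence[OF f_integrable mono pointwise lim_f measurable])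
  show "(\<integral>t. t ^ k \<partial>M) = L"
    by (rule integral_monotone_convergence[OF f_integrable mono pointwise lim_f measurable])
qed

text \<open>Convergence of the \<open>(k+1)\<close>-st moments makes the \<open>k\<close>-th powers uniformly integrable,
  so that the bounded continuous truncations carry the moment convergence over to the weak
  limit.\<close>

lemma weak_conv_moment_convergence:
  assumes \<mu>: "\<And>n. real_distribution (\<mu> n)" and M: "real_distribution M" and conv: "weak_conv_m \<mu> M"
    and nonneg: "\<And>n. AE t in \<mu> n. 0 \<le> t" "AE t in M. 0 \<le> t"
    and integrable: "\<And>n j. integrable (\<mu> n) (\<lambda>t. t ^ j)"
    and moments: "\<And>j. (\<lambda>n. \<integral>t. t ^ j \<partial>\<mu> n) \<longlonglongrightarrow> m j"
  shows "integrable M (\<lambda>t. t ^ k)" and "(\<integral>t. t ^ k \<partial>M) = m k"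
proof -
  obtain B where B: "\<forall>n. norm (\<integral>t. t ^ Suc k \<partial>\<mu> n) \<le> B"
    using BseqE[OF convergent_imp_Bseq[OF convergentI[OF moments[of "Suc k"]]]] by blast
  have limit_error: "\<bar>(\<integral>t. truncated_power R k t \<partial>M) - m k\<bar> \<le> B / R" if "0 < R" for R
  proof (rule LIMSEQ_le_const2)
    show "(\<lambda>n. \<bar>(\<integral>t. truncated_power R k t \<partial>\<mu> n) - (\<integral>t. t ^ k \<partial>\<mu> n)\<bar>)
            \<longlonglongrightarrow> \<bar>(\<integral>t. truncated_power R k t \<partial>M) - m k\<bar>"
      by (intro tendsto_intros moments weak_conv_imp_integral_bdd_continuous_conv[OF \<mu> M conv
          isCont_truncated_power norm_truncated_power_le]) (use that in simp)
    show "\<exists>N. \<forall>n\<ge>N. \<bar>(\<integral>t. truncated_power R k t \<partial>\<mu> n) - (\<integral>t. t ^ k \<partial>\<mu> n)\<bar> \<le> B / R"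
    proof (intro exI allI impI)
      fix n
      have "\<bar>(\<integral>t. truncated_power R k t \<partial>\<mu> n) - (\<integral>t. t ^ k \<partial>\<mu> n)\<bar> \<le> (\<integral>t. t ^ Suc k \<partial>\<mu> n) / R"
        by (rule integral_truncated_power_error[OF \<mu> nonneg(1) integrable that])
      also have "\<dots> \<le> B / R"
        using B that by (intro divide_right_mono) (auto simp: abs_le_iff)
      finally show "\<bar>(\<integral>t. truncated_power R k t \<partial>\<mu> n) - (\<integral>t. t ^ k \<partial>\<mu> n)\<bar> \<le> B / R" .
    qed
  qed
  have "(\<lambda>j. (\<integral>t. truncated_power (real (Suc j)) k t \<partial>M) - m k) \<longlonglongrightarrow> 0"
  proof (rule Lim_null_comparison)
    show "\<forall>\<^sub>F j in sequentially.
            norm ((\<integral>t. truncated_power (real (Suc j)) k t \<partial>M) - m k) \<le> B * inverse (real (Suc j))"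
      using limit_error by (simp add: divide_inverse del: of_nat_Suc)
    show "(\<lambda>j. B * inverse (real (Suc j))) \<longlonglongrightarrow> 0"
      using tendsto_mult_right_zero[OF LIMSEQ_inverse_real_of_nat] .
  qed
  then have lim: "(\<lambda>j. \<integral>t. truncated_power (real (Suc j)) k t \<partial>M) \<longlonglongrightarrow> m k"
    by (simp add: LIM_zero_iff)
  show "integrable M (\<lambda>t. t ^ k)"
    by (rule truncated_power_monotone_convergence(1)[OF M nonneg(2) lim])
  show "(\<integral>t. t ^ k \<partial>M) = m k"
    by (rule truncated_power_monotone_convergence(2)[OF M nonneg(2) lim])
qed

lemma halfline_positive_normalized_stieltjes:
  assumes "halfline_positive m" and "m 0 = 1"
  obtains M where "real_distribution M" and "AE t in M. 0 \<le> t"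
    and "\<And>k. integrable M (\<lambda>t. t ^ k)" and "\<And>k. (\<integral>t. t ^ k \<partial>M) = m k"
proof -
  obtain \<mu> :: "nat \<Rightarrow> real measure" where \<mu>: "\<And>N. real_distribution (\<mu> N)"
    and nonneg: "\<And>N. AE t in \<mu> N. 0 \<le> t" and integrable: "\<And>N k. integrable (\<mu> N) (\<lambda>t. t ^ k)"
    and moments: "\<And>k. (\<lambda>N. \<integral>t. t ^ k \<partial>\<mu> N) \<longlonglongrightarrow> m k"
    using halfline_positive_approx_distributions[OF assms] by blast
  obtain B where B: "\<forall>N. norm (\<integral>t. t ^ 2 \<partial>\<mu> N) \<le> B"
    using BseqE[OF convergent_imp_Bseq[OF convergentI[OF moments[of 2]]]] by blast
  have "tight \<mu>"
  proof (rule tight_if_bounded_second_moments[OF \<mu> integrable])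
    show "(\<integral>t. t ^ 2 \<partial>\<mu> N) \<le> B" for N
      using B[rule_format, of N] by (simp add: abs_le_iff)
  qed
  then obtain r M where r: "strict_mono r" and M: "real_distribution M" and conv: "weak_conv_m (\<mu> \<circ> r) M"
    using tight_imp_convergent_subsubsequence[OF \<open>tight \<mu>\<close> strict_mono_id] unfolding comp_id by blast
  have \<mu>r: "\<And>n. real_distribution ((\<mu> \<circ> r) n)"
    by (simp add: \<mu>)
  show ?thesis
  proof (rule that[OF M])
    show nonneg_M: "AE t in M. 0 \<le> t"
      by (rule weak_conv_AE_nonneg[OF \<mu>r M conv]) (unfold comp_apply, rule nonneg)
    have moments_r: "(\<lambda>n. \<integral>t. t ^ j \<partial>(\<mu> \<circ> r) n) \<longlonglongrightarrow> m j" for j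
      using LIMSEQ_subseq_LIMSEQ[OF moments r] by (simp add: o_def)
    have nonneg_r: "AE t in (\<mu> \<circ> r) n. 0 \<le> t" for n
      unfolding comp_apply by (rule nonneg)
    have integrable_r: "integrable ((\<mu> \<circ> r) n) (\<lambda>t. t ^ j)" for n j
      unfolding comp_apply by (rule integrable)
    show "integrable M (\<lambda>t. t ^ k)" and "(\<integral>t. t ^ k \<partial>M) = m k" for k
      using weak_conv_moment_convergence[OF \<mu>r M conv nonneg_r nonneg_M integrable_r moments_r] by auto
  qed
qed

theorem halfline_positive_stieltjes:
  assumes "halfline_positive m"
  obtains \<nu> :: "real measure" where "sets \<nu> = sets borel" and "AE t in \<nu>. 0 \<le> t"
    and "\<And>k. integrable \<nu> (\<lambda>t. t ^ k)" and "\<And>k. (\<integral>t. t ^ k \<partial>\<nu>) = m k"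
proof (cases "m 0 = 0")
  case True
  show ?thesis
  proof (rule that[of "null_measure borel"])
    show "AE t in null_measure borel. 0 \<le> t"
      by (rule AE_I'[of UNIV]) (auto simp: null_sets_def)
  qed (simp_all add: halfline_positive_eq_0[OF assms True])
next
  case False
  then have "0 < m 0"
    using halfline_positive_nonneg[OF assms] by simp
  have normalized: "halfline_positive (\<lambda>k. m k / m 0)"
    unfolding halfline_positive_def
  proof (intro allI impI)
    fix a :: "nat \<Rightarrow> real" and D :: nat
    assume "\<forall>t\<ge>0. 0 \<le> (\<Sum>k\<le>D. a k * t ^ k)"
    then have "0 \<le> (\<Sum>k\<le>D. a k * m k)"
      using halfline_positiveD[OF assms] by blast
    then show "0 \<le> (\<Sum>k\<le>D. a k * (m k / m 0))"
      using \<open>0 < m 0\<close> by (simp add: sum_divide_distrib[symmetric])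
  qed
  have "(\<lambda>k. m k / m 0) 0 = 1"
    using \<open>0 < m 0\<close> by simp
  then obtain M where M: "real_distribution M" "AE t in M. 0 \<le> t"
    "\<And>k. integrable M (\<lambda>t. t ^ k)" "\<And>k. (\<integral>t. t ^ k \<partial>M) = m k / m 0"
    using halfline_positive_normalized_stieltjes[OF normalized] by blast
  interpret M: real_distribution M
    by (rule M(1))
  show ?thesis
  proof (rule that[of "density M (\<lambda>_. m 0)"])
    show "AE t in density M (\<lambda>_. ennreal (m 0)). 0 \<le> t"
      using M(2) by (simp add: AE_density)
    show "integrable (density M (\<lambda>_. ennreal (m 0))) (\<lambda>t. t ^ k)" for k
      using M(3)[of k] \<open>0 < m 0\<close> by (subst integrable_density) auto
    show "(\<integral>t. t ^ k \<partial>density M (\<lambda>_. ennreal (m 0))) = m k" for k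
      using M(4)[of k] \<open>0 < m 0\<close> by (subst integral_density) auto
  qed simp
qed

section \<open>Polynomials, the Riesz functional and \<open>D(s)\<close>\<close>

lemma atMost_fun_eq_PiE: "{..\<gamma>} = PiE UNIV (\<lambda>i. {..\<gamma> i :: nat})"
  by (auto simp: PiE_UNIV_domain le_fun_def Pi_def)

lemma finite_atMost_fun [simp]: "finite {..(\<gamma> :: 'v::finite \<Rightarrow> nat)}"
  unfolding atMost_fun_eq_PiE by (rule finite_PiE) auto

lemma monom_eval_zero [simp]: "monom_eval 0 x = 1"
  by (simp add: monom_eval_def)

lemma monom_eval_add: "monom_eval (\<alpha> + \<beta>) x = monom_eval \<alpha> x * monom_eval \<beta> x"
  by (simp add: monom_eval_def power_add prod.distrib)

lemma monom_eval_split_var: "monom_eval \<beta> x = (x $ j) ^ \<beta> j * monom_eval (\<beta>(j := 0)) x"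
proof -
  have "monom_eval (\<beta>(j := 0)) x = (\<Prod>i\<in>UNIV - {j}. (x $ i) ^ \<beta> i)"
    unfolding monom_eval_def by (subst prod.remove[of UNIV j]) (auto intro!: prod.cong)
  then show ?thesis
    unfolding monom_eval_def by (subst prod.remove[of UNIV j]) auto
qed

definition unit_index :: "'v \<Rightarrow> 'v \<Rightarrow> nat" where
  "unit_index j = (\<lambda>i. if i = j then 1 else 0)"

lemma monom_eval_unit_index: "monom_eval (unit_index j) x = x $ j"
  unfolding monom_eval_def unit_index_def by (simp add: if_distrib prod.delta cong: if_cong)

definition mchoose :: "('v::finite \<Rightarrow> nat) \<Rightarrow> ('v \<Rightarrow> nat) \<Rightarrow> real" where
  "mchoose \<gamma> \<alpha> = (\<Prod>i\<in>UNIV. real (\<gamma> i choose \<alpha> i))"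

lemma monom_eval_binomial:
  "monom_eval \<gamma> (x + z) = (\<Sum>\<alpha>\<in>{..\<gamma>}. mchoose \<gamma> \<alpha> * monom_eval \<alpha> z * monom_eval (\<gamma> - \<alpha>) x)"
proof -
  have "monom_eval \<gamma> (x + z) = (\<Prod>i\<in>UNIV. (z $ i + x $ i) ^ \<gamma> i)"
    unfolding monom_eval_def by (simp add: add.commute)
  also have "\<dots> = (\<Prod>i\<in>UNIV. \<Sum>k\<le>\<gamma> i. real (\<gamma> i choose k) * (z $ i) ^ k * (x $ i) ^ (\<gamma> i - k))"
    by (subst binomial_ring) simp
  also have "\<dots> = (\<Sum>\<alpha>\<in>PiE UNIV (\<lambda>i. {..\<gamma> i}).
                     \<Prod>i\<in>UNIV. real (\<gamma> i choose \<alpha> i) * (z $ i) ^ \<alpha> i * (x $ i) ^ (\<gamma> i - \<alpha> i))"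
    by (rule prod_sum_PiE) auto
  also have "\<dots> = (\<Sum>\<alpha>\<in>{..\<gamma>}. mchoose \<gamma> \<alpha> * monom_eval \<alpha> z * monom_eval (\<gamma> - \<alpha>) x)"
    by (simp add: atMost_fun_eq_PiE mchoose_def monom_eval_def prod.distrib)
  finally show ?thesis .
qed

definition riesz :: "('a \<Rightarrow> real) \<Rightarrow> ('a \<Rightarrow> real) \<Rightarrow> real" where
  "riesz s c = (\<Sum>\<alpha> | c \<alpha> \<noteq> 0. s \<alpha> * c \<alpha>)"

lemma riesz_eq_sum:
  assumes "finite S" and "{\<alpha>. c \<alpha> \<noteq> 0} \<subseteq> S"
  shows "riesz s c = (\<Sum>\<alpha>\<in>S. s \<alpha> * c \<alpha>)"
  unfolding riesz_def by (rule sum.mono_neutral_left) (use assms in auto)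

lemma meval_eq_riesz: "meval c x = riesz (\<lambda>\<alpha>. monom_eval \<alpha> x) c"
  by (simp add: meval_def riesz_def mult.commute)

lemma meval_eq_sum:
  assumes "finite S" and "{\<alpha>. c \<alpha> \<noteq> 0} \<subseteq> S"
  shows "meval c x = (\<Sum>\<alpha>\<in>S. c \<alpha> * monom_eval \<alpha> x)"
  unfolding meval_eq_riesz riesz_eq_sum[OF assms] by (simp add: mult.commute)

definition monom_comb :: "'i set \<Rightarrow> ('i \<Rightarrow> real) \<Rightarrow> ('i \<Rightarrow> 'a) \<Rightarrow> 'a \<Rightarrow> real" where
  "monom_comb I a f \<alpha> = (\<Sum>i\<in>I. if f i = \<alpha> then a i else 0)"

lemma monom_comb_support: "{\<alpha>. monom_comb I a f \<alpha> \<noteq> 0} \<subseteq> f ` I"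
  by (auto simp: monom_comb_def elim!: sum.not_neutral_contains_not_neutral split: if_splits)

lemma mpoly_monom_comb: "finite I \<Longrightarrow> mpoly (monom_comb I a f)"
  unfolding mpoly_def by (rule finite_subset[OF monom_comb_support]) simp

lemma riesz_monom_comb:
  assumes "finite I"
  shows "riesz s (monom_comb I a f) = (\<Sum>i\<in>I. a i * s (f i))"
proof -
  have "riesz s (monom_comb I a f) = (\<Sum>\<alpha>\<in>f ` I. \<Sum>i\<in>I. if f i = \<alpha> then a i * s (f i) else 0)"
    using assms by (subst riesz_eq_sum[OF _ monom_comb_support])
      (auto simp: monom_comb_def sum_distrib_left mult.commute intro!: sum.cong)
  also have "\<dots> = (\<Sum>i\<in>I. a i * s (f i))"
    using assms by (subst sum.swap) simp
  finally show ?thesis .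
qed

lemma meval_monom_comb:
  "finite I \<Longrightarrow> meval (monom_comb I a f) x = (\<Sum>i\<in>I. a i * monom_eval (f i) x)"
  by (simp add: meval_eq_riesz riesz_monom_comb)

definition mtranslate :: "real^'v \<Rightarrow> (('v::finite \<Rightarrow> nat) \<Rightarrow> real) \<Rightarrow> ('v \<Rightarrow> nat) \<Rightarrow> real" where
  "mtranslate x c = monom_comb (SIGMA \<gamma>:{\<gamma>. c \<gamma> \<noteq> 0}. {..\<gamma>})
     (\<lambda>(\<gamma>, \<alpha>). c \<gamma> * mchoose \<gamma> \<alpha> * monom_eval (\<gamma> - \<alpha>) x) snd"

lemma finite_SIGMA_atMost: "mpoly c \<Longrightarrow> finite (SIGMA \<gamma>:{\<gamma>. c \<gamma> \<noteq> 0}. {..\<gamma>})"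
  by (auto simp: mpoly_def)

lemma mpoly_mtranslate: "mpoly c \<Longrightarrow> mpoly (mtranslate x c)"
  unfolding mtranslate_def by (intro mpoly_monom_comb finite_SIGMA_atMost)

lemma riesz_mtranslate:
  assumes "mpoly c"
  shows "riesz s (mtranslate x c)
           = (\<Sum>\<gamma> | c \<gamma> \<noteq> 0. \<Sum>\<alpha>\<in>{..\<gamma>}. c \<gamma> * mchoose \<gamma> \<alpha> * monom_eval (\<gamma> - \<alpha>) x * s \<alpha>)"
  unfolding mtranslate_def riesz_monom_comb[OF finite_SIGMA_atMost[OF assms]]
  using assms by (subst sum.Sigma) (auto simp: mpoly_def split_def)

lemma meval_mtranslate:
  assumes "mpoly c"
  shows "meval (mtranslate x c) z = meval c (x + z)"
proof -
  have "meval (mtranslate x c) z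
          = (\<Sum>\<gamma> | c \<gamma> \<noteq> 0. c \<gamma> * (\<Sum>\<alpha>\<in>{..\<gamma>}. mchoose \<gamma> \<alpha> * monom_eval \<alpha> z * monom_eval (\<gamma> - \<alpha>) x))"
    unfolding meval_eq_riesz riesz_mtranslate[OF assms] by (simp add: sum_distrib_left algebra_simps)
  also have "\<dots> = meval c (x + z)"
    by (simp add: meval_def monom_eval_binomial)
  finally show ?thesis .
qed

lemma mpartial_eq: "mpartial \<alpha> c \<beta> = c (\<alpha> + \<beta>) * (\<Prod>i\<in>UNIV. fact (\<alpha> i + \<beta> i) / fact (\<beta> i))"
  by (simp add: mpartial_def plus_fun_def)

lemma mpartial_coeff: "(\<Prod>i\<in>UNIV. fact (\<alpha> i + \<beta> i) / fact (\<beta> i)) / mfact \<alpha> = mchoose (\<alpha> + \<beta>) \<alpha>"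
  unfolding mfact_def mchoose_def prod_dividef[symmetric]
  by (intro prod.cong) (simp_all add: binomial_fact divide_divide_eq_left mult.commute)

lemma fun_add_diff_cancel: "\<alpha> \<le> \<gamma> \<Longrightarrow> \<alpha> + (\<gamma> - \<alpha>) = (\<gamma> :: 'a \<Rightarrow> nat)"
  by (auto simp: le_fun_def fun_eq_iff)

lemma fun_add_diff_cancel_left: "(\<alpha> + \<beta>) - \<alpha> = (\<beta> :: 'a \<Rightarrow> nat)"
  by (simp add: fun_eq_iff)

lemma Dop_eq_sum: "Dop s c \<beta> = (\<Sum>\<alpha>\<in>(\<Union>\<gamma>\<in>{\<gamma>. c \<gamma> \<noteq> 0}. {..\<gamma>}). s \<alpha> / mfact \<alpha> * mpartial \<alpha> c \<beta>)"
  unfolding Dop_def by (rule sum.cong) (auto simp: le_fun_def)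

lemma Dop_support: "{\<beta>. Dop s c \<beta> \<noteq> 0} \<subseteq> (\<Union>\<gamma>\<in>{\<gamma>. c \<gamma> \<noteq> 0}. {..\<gamma>})"
proof
  fix \<beta> assume "\<beta> \<in> {\<beta>. Dop s c \<beta> \<noteq> 0}"
  then obtain \<alpha> where "s \<alpha> / mfact \<alpha> * mpartial \<alpha> c \<beta> \<noteq> 0"
    unfolding Dop_eq_sum by (auto elim: sum.not_neutral_contains_not_neutral)
  then have "c (\<alpha> + \<beta>) \<noteq> 0"
    by (auto simp: mpartial_eq)
  then show "\<beta> \<in> (\<Union>\<gamma>\<in>{\<gamma>. c \<gamma> \<noteq> 0}. {..\<gamma>})"
    by (auto simp: le_fun_def)
qed

text \<open>Taylor's formula \<open>D(s) p (x) = L\<^sub>s (p (x + \<cdot>))\<close>, where \<open>L\<^sub>s = riesz s\<close>.\<close>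

lemma meval_Dop_eq_riesz_mtranslate:
  assumes "mpoly c"
  shows "meval (Dop s c) x = riesz s (mtranslate x c)"
proof -
  define Sc where "Sc = {\<gamma>. c \<gamma> \<noteq> 0}"
  define A where "A = (\<Union>\<gamma>\<in>Sc. {..\<gamma>})"
  have "finite Sc"
    using assms by (simp add: Sc_def mpoly_def)
  then have "finite A"
    by (simp add: A_def)
  define G where "G \<beta> \<alpha> = s \<alpha> / mfact \<alpha> * mpartial \<alpha> c \<beta> * monom_eval \<beta> x" for \<beta> \<alpha>
  have "meval (Dop s c) x = (\<Sum>\<beta>\<in>A. \<Sum>\<alpha>\<in>A. G \<beta> \<alpha>)"
    using \<open>finite A\<close> Dop_support[of s c]
    by (simp add: meval_eq_sum Dop_eq_sum G_def A_def Sc_def sum_distrib_right)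
  also have "\<dots> = (\<Sum>(\<beta>, \<alpha>)\<in>{(\<beta>, \<alpha>)\<in>A \<times> A. c (\<alpha> + \<beta>) \<noteq> 0}. G \<beta> \<alpha>)"
    unfolding sum.cartesian_product using \<open>finite A\<close>
    by (intro sum.mono_neutral_right) (auto simp: G_def mpartial_eq)
  also have "\<dots> = (\<Sum>(\<gamma>, \<alpha>)\<in>(SIGMA \<gamma>:Sc. {..\<gamma>}). c \<gamma> * mchoose \<gamma> \<alpha> * monom_eval (\<gamma> - \<alpha>) x * s \<alpha>)"
  proof (rule sum.reindex_bij_witness[where i = "\<lambda>(\<gamma>, \<alpha>). (\<gamma> - \<alpha>, \<alpha>)" and j = "\<lambda>(\<beta>, \<alpha>). (\<alpha> + \<beta>, \<alpha>)"])
    fix p assume "p \<in> (SIGMA \<gamma>:Sc. {..\<gamma>})"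
    then obtain \<gamma> \<alpha> where p: "p = (\<gamma>, \<alpha>)" "\<gamma> \<in> Sc" "\<alpha> \<le> \<gamma>"
      by auto
    have "\<gamma> - \<alpha> \<le> \<gamma>"
      by (auto simp: le_fun_def)
    then show "(case (case p of (\<gamma>, \<alpha>) \<Rightarrow> (\<gamma> - \<alpha>, \<alpha>)) of (\<beta>, \<alpha>) \<Rightarrow> (\<alpha> + \<beta>, \<alpha>)) = p"
      and "(case p of (\<gamma>, \<alpha>) \<Rightarrow> (\<gamma> - \<alpha>, \<alpha>)) \<in> {(\<beta>, \<alpha>)\<in>A \<times> A. c (\<alpha> + \<beta>) \<noteq> 0}"
      using p fun_add_diff_cancel[OF p(3)] by (auto simp: A_def Sc_def)
  next
    fix p assume "p \<in> {(\<beta>, \<alpha>)\<in>A \<times> A. c (\<alpha> + \<beta>) \<noteq> 0}"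
    then obtain \<beta> \<alpha> where p: "p = (\<beta>, \<alpha>)" "c (\<alpha> + \<beta>) \<noteq> 0"
      by auto
    then show "(case (case p of (\<beta>, \<alpha>) \<Rightarrow> (\<alpha> + \<beta>, \<alpha>)) of (\<gamma>, \<alpha>) \<Rightarrow> (\<gamma> - \<alpha>, \<alpha>)) = p"
      and "(case p of (\<beta>, \<alpha>) \<Rightarrow> (\<alpha> + \<beta>, \<alpha>)) \<in> (SIGMA \<gamma>:Sc. {..\<gamma>})"
      by (auto simp: Sc_def fun_add_diff_cancel_left le_fun_def)
    have "G \<beta> \<alpha> = c (\<alpha> + \<beta>) * ((\<Prod>i\<in>UNIV. fact (\<alpha> i + \<beta> i) / fact (\<beta> i)) / mfact \<alpha>)
                     * monom_eval \<beta> x * s \<alpha>"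
      by (simp add: G_def mpartial_eq mult_ac)
    then show "(case (case p of (\<beta>, \<alpha>) \<Rightarrow> (\<alpha> + \<beta>, \<alpha>)) of
                  (\<gamma>, \<alpha>) \<Rightarrow> c \<gamma> * mchoose \<gamma> \<alpha> * monom_eval (\<gamma> - \<alpha>) x * s \<alpha>)
                 = (case p of (\<beta>, \<alpha>) \<Rightarrow> G \<beta> \<alpha>)"
      unfolding mpartial_coeff using p(1) by (simp add: fun_add_diff_cancel_left)
  qed
  also have "\<dots> = riesz s (mtranslate x c)"
    using \<open>finite Sc\<close> by (simp add: riesz_mtranslate[OF assms] Sc_def sum.Sigma)
  finally show ?thesis .
qed

text \<open>\<open>mslice j k c\<close> is the coefficient of \<open>x\<^sub>j\<^sup>k\<close> in \<open>c\<close>, a polynomial in the other variables.\<close>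

definition mslice :: "'v \<Rightarrow> nat \<Rightarrow> (('v \<Rightarrow> nat) \<Rightarrow> real) \<Rightarrow> ('v \<Rightarrow> nat) \<Rightarrow> real" where
  "mslice j k c \<alpha> = (if \<alpha> j = 0 then c (\<alpha>(j := k)) else 0)"

lemma mslice_support:
  "{\<alpha>. mslice j k c \<alpha> \<noteq> 0} = (\<lambda>\<beta>. \<beta>(j := 0)) ` {\<beta>. c \<beta> \<noteq> 0 \<and> \<beta> j = k}"
proof safe
  fix \<alpha> assume "mslice j k c \<alpha> \<noteq> 0"
  then have "\<alpha> j = 0" and "c (\<alpha>(j := k)) \<noteq> 0"
    by (auto simp: mslice_def split: if_splits)
  then show "\<alpha> \<in> (\<lambda>\<beta>. \<beta>(j := 0)) ` {\<beta>. c \<beta> \<noteq> 0 \<and> \<beta> j = k}"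
    by (intro image_eqI[of _ _ "\<alpha>(j := k)"]) auto
next
  fix \<beta> assume "c \<beta> \<noteq> 0" and "mslice j (\<beta> j) c (\<beta>(j := 0)) = 0"
  then show False
    by (simp add: mslice_def)
qed

lemma mpoly_mslice: "mpoly c \<Longrightarrow> mpoly (mslice j k c)"
  unfolding mpoly_def mslice_support by (auto intro: finite_subset)

lemma meval_mslice:
  "meval (mslice j k c) x = (\<Sum>\<beta> | c \<beta> \<noteq> 0 \<and> \<beta> j = k. c \<beta> * monom_eval (\<beta>(j := 0)) x)"
proof -
  have "inj_on (\<lambda>\<beta>. \<beta>(j := 0)) {\<beta>. c \<beta> \<noteq> 0 \<and> \<beta> j = k}"
    by (rule inj_onI) (metis (mono_tags, lifting) fun_upd_triv fun_upd_upd mem_Collect_eq)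
  then show ?thesis
    unfolding meval_def mslice_support by (subst sum.reindex) (auto simp: mslice_def intro!: sum.cong)
qed

lemma meval_expand_var:
  assumes "mpoly c" and "\<And>\<beta>. c \<beta> \<noteq> 0 \<Longrightarrow> \<beta> j \<le> D"
  shows "meval c x = (\<Sum>k\<le>D. (x $ j) ^ k * meval (mslice j k c) x)"
proof -
  have "meval c x = (\<Sum>k\<le>D. \<Sum>\<beta> | c \<beta> \<noteq> 0 \<and> \<beta> j = k. c \<beta> * monom_eval \<beta> x)"
    unfolding meval_def using assms
    by (subst sum.group[symmetric, where g = "\<lambda>\<beta>. \<beta> j"]) (auto simp: mpoly_def intro!: sum.cong)
  also have "\<dots> = (\<Sum>k\<le>D. (x $ j) ^ k * meval (mslice j k c) x)"
    unfolding meval_mslice sum_distrib_left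
    by (intro sum.cong refl) (subst monom_eval_split_var[of _ _ j], simp add: mult_ac)
  finally show ?thesis .
qed

lemma meval_mslice_update: "meval (mslice j k c) (\<chi> i. if i = j then t else x $ i) = meval (mslice j k c) x"
  unfolding meval_def monom_eval_def by (intro sum.cong refl arg_cong[where f = "(*) _"] prod.cong)
    (auto simp: mslice_def split: if_splits)

lemma meval_mslice_eq_0:
  assumes "mpoly c" and "\<And>x. meval c x = 0"
  shows "meval (mslice j k c) x = 0"
proof -
  obtain D where D: "\<And>\<beta>. c \<beta> \<noteq> 0 \<Longrightarrow> \<beta> j \<le> D"
  proof -
    have "finite ((\<lambda>\<beta>. \<beta> j) ` {\<beta>. c \<beta> \<noteq> 0})"
      using assms(1) by (simp add: mpoly_def)
    then show ?thesis
      using that by (auto simp: finite_nat_set_iff_bounded_le)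
  qed
  show ?thesis
  proof (cases "k \<le> D")
    case True
    have "(\<Sum>k\<le>D. meval (mslice j k c) x * t ^ k) = 0" for t
      using assms(2)[of "\<chi> i. if i = j then t else x $ i"]
      by (simp add: meval_expand_var[OF assms(1) D] meval_mslice_update mult.commute)
    then show ?thesis
      by (rule zero_polynom_imp_zero_coeffs[where c = "\<lambda>k. meval (mslice j k c) x"]) (rule True)
  next
    case False
    then have "mslice j k c \<beta> = 0" for \<beta>
      using D[of "\<beta>(j := k)"] by (auto simp: mslice_def)
    then show ?thesis
      by (simp add: meval_def)
  qed
qed

lemma mpoly_eq_0_if_vars:
  assumes "finite V" and "mpoly c" and "\<And>\<alpha> i. c \<alpha> \<noteq> 0 \<Longrightarrow> i \<notin> V \<Longrightarrow> \<alpha> i = 0"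
    and "\<And>x. meval c x = 0"
  shows "c \<alpha> = 0"
  using assms
proof (induction V arbitrary: c \<alpha> rule: finite_induct)
  case empty
  then have support: "{\<alpha>. c \<alpha> \<noteq> 0} \<subseteq> {0}"
    by (auto simp: fun_eq_iff)
  have "c 0 = meval c 0"
    using meval_eq_sum[OF _ support] by simp
  then show ?case
    using empty.prems(3) support by (cases "\<alpha> = 0") auto
next
  case (insert j V)
  have "mslice j k c \<beta> = 0" for k \<beta>
  proof (rule insert.IH)
    show "mpoly (mslice j k c)"
      by (rule mpoly_mslice[OF insert.prems(1)])
    show "\<beta> i = 0" if "mslice j k c \<beta> \<noteq> 0" and "i \<notin> V" for \<beta> i
      using that insert.prems(2)[of "\<beta>(j := k)" i] by (auto simp: mslice_def fun_upd_def split: if_splits)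
  qed (rule meval_mslice_eq_0[OF insert.prems(1,3)])
  from this[of "\<alpha> j" "\<alpha>(j := 0)"] show ?case
    by (simp add: mslice_def)
qed

lemma mpoly_eq_0: "mpoly c \<Longrightarrow> (\<And>x. meval c x = 0) \<Longrightarrow> c = 0"
  using mpoly_eq_0_if_vars[of UNIV c] by (auto simp: fun_eq_iff)

lemma mpoly_eqI:
  assumes "mpoly c" and "mpoly d" and "\<And>x. meval c x = meval d x"
  shows "c = d"
proof -
  define S where "S = {\<alpha>. c \<alpha> \<noteq> 0} \<union> {\<alpha>. d \<alpha> \<noteq> 0}"
  have "finite S"
    using assms by (simp add: S_def mpoly_def)
  have "mpoly (c - d)"
    unfolding mpoly_def by (rule finite_subset[OF _ \<open>finite S\<close>]) (auto simp: S_def)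
  moreover have "meval (c - d) x = meval c x - meval d x" for x
    using \<open>finite S\<close>
    by (subst (1 2 3) meval_eq_sum[of S]) (auto simp: S_def left_diff_distrib sum_subtractf)
  ultimately have "c - d = 0"
    using assms(3) by (intro mpoly_eq_0) auto
  then show ?thesis
    by simp
qed

section \<open>Positivity preservers and moment sequences\<close>

lemma pos_preserver_riesz_nonneg:
  assumes "pos_preserver K (Dop s)" and "x \<in> K" and "mpoly e" and "\<And>z. x + z \<in> K \<Longrightarrow> 0 \<le> meval e z"
  shows "0 \<le> riesz s e"
proof -
  let ?c = "mtranslate (- x) e"
  have "mpoly ?c"
    by (rule mpoly_mtranslate[OF assms(3)])
  have "0 \<le> meval ?c y" if "y \<in> K" for y
    using assms(4)[of "- x + y"] that by (simp add: meval_mtranslate[OF assms(3)])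
  then have "0 \<le> meval (Dop s ?c) x"
    using assms(1,2) \<open>mpoly ?c\<close> by (auto simp: pos_preserver_def)
  also have "meval (Dop s ?c) x = riesz s (mtranslate x ?c)"
    by (rule meval_Dop_eq_riesz_mtranslate[OF \<open>mpoly ?c\<close>])
  also have "mtranslate x ?c = e"
    by (intro mpoly_eqI mpoly_mtranslate \<open>mpoly ?c\<close> assms(3))
      (simp add: meval_mtranslate \<open>mpoly ?c\<close> assms(3))
  finally show ?thesis .
qed

corollary pos_preserver_monom_comb_nonneg:
  assumes "pos_preserver K (Dop s)" and "x \<in> K" and "finite I"
    and "\<And>z. x + z \<in> K \<Longrightarrow> 0 \<le> (\<Sum>i\<in>I. a i * monom_eval (f i) z)"
  shows "0 \<le> (\<Sum>i\<in>I. a i * s (f i))"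
  using pos_preserver_riesz_nonneg[OF assms(1,2) mpoly_monom_comb[OF assms(3)], of a f] assms(4)
  by (simp add: meval_monom_comb riesz_monom_comb assms(3))

lemma pos_preserver_square_nonneg:
  assumes "pos_preserver K (Dop s)" and "x \<in> K"
  shows "0 \<le> a\<^sup>2 * s (\<gamma> + \<gamma>) + 2 * a * b * s (\<gamma> + \<beta>) + b\<^sup>2 * s (\<beta> + \<beta>)"
proof -
  have "0 \<le> (\<Sum>i\<in>{0::nat, 1, 2}. [a\<^sup>2, 2 * a * b, b\<^sup>2] ! i * s ([\<gamma> + \<gamma>, \<gamma> + \<beta>, \<beta> + \<beta>] ! i))"
  proof (rule pos_preserver_monom_comb_nonneg[OF assms])
    fix z
    have "(\<Sum>i\<in>{0::nat, 1, 2}. [a\<^sup>2, 2 * a * b, b\<^sup>2] ! i * monom_eval ([\<gamma> + \<gamma>, \<gamma> + \<beta>, \<beta> + \<beta>] ! i) z)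
            = (a * monom_eval \<gamma> z + b * monom_eval \<beta> z)\<^sup>2"
      by (simp add: monom_eval_add power2_eq_square algebra_simps)
    then show "0 \<le> (\<Sum>i\<in>{0::nat, 1, 2}. [a\<^sup>2, 2 * a * b, b\<^sup>2] ! i * monom_eval ([\<gamma> + \<gamma>, \<gamma> + \<beta>, \<beta> + \<beta>] ! i) z)"
      by simp
  qed simp
  then show ?thesis
    by (simp add: algebra_simps)
qed

lemma pos_preserver_linear_quadratic_nonneg:
  assumes "pos_preserver K (Dop s)" and "x \<in> K"
    and "\<And>z. x + z \<in> K \<Longrightarrow> 0 \<le> p * z $ j + q * (z $ j)\<^sup>2"
  shows "0 \<le> p * s (unit_index j) + q * s (unit_index j + unit_index j)"
  using pos_preserver_monom_comb_nonneg[OF assms(1,2), of "{0::nat, 1}" "\<lambda>i. if i = 0 then p else q"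
      "\<lambda>i. if i = 0 then unit_index j else unit_index j + unit_index j"] assms(3)
  by (simp add: monom_eval_add monom_eval_unit_index power2_eq_square)

lemma continuous_on_monom_eval: "continuous_on S (monom_eval \<alpha>)"
  unfolding monom_eval_def by (intro continuous_intros)

lemma borel_measurable_monom_eval [measurable]: "monom_eval \<alpha> \<in> borel_measurable borel"
  by (rule borel_measurable_continuous_onI[OF continuous_on_monom_eval])

lemma riesz_moment_integral:
  assumes "\<And>\<alpha>. integrable \<mu> (monom_eval \<alpha>)" and "\<And>\<alpha>. s \<alpha> = (\<integral>x. monom_eval \<alpha> x \<partial>\<mu>)"
    and "mpoly c"
  shows "riesz s c = (\<integral>x. meval c x \<partial>\<mu>)"
proof -
  have "riesz s c = (\<Sum>\<alpha> | c \<alpha> \<noteq> 0. \<integral>x. c \<alpha> * monom_eval \<alpha> x \<partial>\<mu>)"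
    unfolding riesz_def assms(2) by (simp add: mult.commute)
  also have "\<dots> = (\<integral>x. meval c x \<partial>\<mu>)"
    unfolding meval_def using assms(1) by (intro Bochner_Integration.integral_sum[symmetric]) auto
  finally show ?thesis .
qed

theorem moment_seq_imp_pos_preserver:
  assumes "moment_seq L s" and "L \<in> sets borel" and "L \<subseteq> Ksharp K"
  shows "pos_preserver K (Dop s)"
  unfolding pos_preserver_def
proof (intro allI impI ballI)
  fix c x assume c: "mpoly c \<and> (\<forall>x\<in>K. 0 \<le> meval c x)" and "x \<in> K"
  obtain \<mu> where sets: "sets \<mu> = sets borel" and null: "emeasure \<mu> (UNIV - L) = 0"
    and integrable: "\<And>\<alpha>. integrable \<mu> (monom_eval \<alpha>)"
    and moments: "\<And>\<alpha>. s \<alpha> = (\<integral>x. monom_eval \<alpha> x \<partial>\<mu>)"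
    using assms(1) by (auto simp: moment_seq_def)
  have "AE y in \<mu>. y \<in> L"
    by (rule AE_I'[of "UNIV - L"]) (use null assms(2) sets in \<open>auto simp: null_sets_def\<close>)
  then have "AE y in \<mu>. 0 \<le> meval c (x + y)"
  proof (rule eventually_mono)
    fix y assume "y \<in> L"
    then have "y + x \<in> K"
      using assms(3) \<open>x \<in> K\<close> by (auto simp: Ksharp_def)
    then show "0 \<le> meval c (x + y)"
      using c by (simp add: add.commute)
  qed
  then have "0 \<le> (\<integral>y. meval c (x + y) \<partial>\<mu>)"
    by (rule integral_nonneg_AE)
  also have "(\<integral>y. meval c (x + y) \<partial>\<mu>) = (\<integral>y. meval (mtranslate x c) y \<partial>\<mu>)"
    using c by (simp add: meval_mtranslate)
  also have "\<dots> = riesz s (mtranslate x c)"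
    using c by (intro riesz_moment_integral[symmetric] integrable moments mpoly_mtranslate) simp
  also have "\<dots> = meval (Dop s c) x"
    using c by (simp add: meval_Dop_eq_riesz_mtranslate)
  finally show "0 \<le> meval (Dop s c) x" .
qed

section \<open>The cylinder \<open>C \<times> [0, \<infinity>)\<close>\<close>

definition cylinder :: "(real^'n::finite) set \<Rightarrow> (real^'n option) set" where
  "cylinder C = {x. (\<chi> i. x $ Some i) \<in> C \<and> 0 \<le> x $ None}"

definition vertical_ray :: "(real^('n::finite) option) set" where
  "vertical_ray = {x. (\<forall>j. x $ Some j = 0) \<and> 0 \<le> x $ None}"

definition lift :: "real^('n::finite) \<Rightarrow> real \<Rightarrow> real^'n option" where
  "lift c t = (\<chi> i. case i of None \<Rightarrow> t | Some j \<Rightarrow> c $ j)"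

lemma lift_nth [simp]: "lift c t $ None = t" "lift c t $ Some j = c $ j"
  by (simp_all add: lift_def)

lemma lift_add_mem_cylinder:
  "lift c t + z \<in> cylinder C \<longleftrightarrow> c + (\<chi> i. z $ Some i) \<in> C \<and> 0 \<le> t + z $ None"
proof -
  have "(\<chi> i. (lift c t + z) $ Some i) = c + (\<chi> i. z $ Some i)"
    by (simp add: vec_eq_iff)
  then show ?thesis
    by (simp add: cylinder_def)
qed

lemma lift_mem_cylinder: "c \<in> C \<Longrightarrow> 0 \<le> t \<Longrightarrow> lift c t \<in> cylinder C"
  by (simp add: cylinder_def)

lemma translation_stable_compact_eq_0:
  fixes v :: "'a::real_inner"
  assumes "compact C" and "C \<noteq> {}" and "\<And>c. c \<in> C \<Longrightarrow> v + c \<in> C"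
  shows "v = 0"
proof -
  have "continuous_on C (\<lambda>d. v \<bullet> d)"
    by (intro continuous_intros)
  then obtain c where "c \<in> C" and max: "\<And>d. d \<in> C \<Longrightarrow> v \<bullet> d \<le> v \<bullet> c"
    using continuous_attains_sup[OF assms(1,2)] by blast
  have "v \<bullet> (v + c) \<le> v \<bullet> c"
    using max assms(3) \<open>c \<in> C\<close> by blast
  then have "v \<bullet> v \<le> 0"
    by (simp add: inner_add_right)
  then show "v = 0"
    by (metis inner_eq_zero_iff inner_ge_zero order_antisym)
qed

lemma Ksharp_cylinder:
  fixes C :: "(real^'n::finite) set"
  assumes "compact C" and "C \<noteq> {}"
  shows "Ksharp (cylinder C) = vertical_ray"
proof (intro antisym subsetI)
  fix y :: "real^'n option" assume "y \<in> vertical_ray"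
  then have "y + x \<in> cylinder C" if "x \<in> cylinder C" for x
  proof -
    have "(\<chi> i. (y + x) $ Some i) = (\<chi> i. x $ Some i)"
      using \<open>y \<in> vertical_ray\<close> by (simp add: vertical_ray_def vec_eq_iff)
    then show ?thesis
      using that \<open>y \<in> vertical_ray\<close> by (simp add: cylinder_def vertical_ray_def)
  qed
  then show "y \<in> Ksharp (cylinder C)"
    by (auto simp: Ksharp_def)
next
  fix y assume y: "y \<in> Ksharp (cylinder C)"
  have shift: "(\<chi> i. y $ Some i) + c \<in> C \<and> 0 \<le> y $ None" if "c \<in> C" for c
    using y lift_mem_cylinder[OF that order_refl] lift_add_mem_cylinder[of c 0 y C]
    by (auto simp: Ksharp_def add.commute)
  have "(\<chi> i. y $ Some i) = 0"
    by (rule translation_stable_compact_eq_0[OF assms]) (use shift in blast)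
  moreover have "0 \<le> y $ None"
    using shift assms(2) by blast
  ultimately show "y \<in> vertical_ray"
    by (simp add: vertical_ray_def vec_eq_iff)
qed

lemma closed_vertical_ray: "closed (vertical_ray :: (real^'n::finite option) set)"
proof -
  have "closed {x :: real^'n option. x $ Some j = 0}" for j :: 'n
    by (intro closed_Collect_eq continuous_intros)
  moreover have "closed {x :: real^'n option. 0 \<le> x $ None}"
    by (intro closed_Collect_le continuous_intros)
  ultimately have "closed ((\<Inter>j. {x :: real^'n option. x $ Some j = 0}) \<inter> {x. 0 \<le> x $ None})"
    by (intro closed_Int closed_INT) auto
  also have "(\<Inter>j. {x :: real^'n option. x $ Some j = 0}) \<inter> {x. 0 \<le> x $ None} = vertical_ray"
    by (auto simp: vertical_ray_def)
  finally show ?thesis .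
qed

definition vertical_index :: "nat \<Rightarrow> ('n::finite) option \<Rightarrow> nat" where
  "vertical_index k = (\<lambda>i. if i = None then k else 0)"

lemma monom_eval_vertical_index: "monom_eval (vertical_index k) x = (x $ None) ^ k"
  unfolding monom_eval_def vertical_index_def by (simp add: if_distrib prod.delta cong: if_cong)

lemma pos_preserver_cylinder_halfline_positive:
  assumes "C \<noteq> {}" and "pos_preserver (cylinder C) (Dop s)"
  shows "halfline_positive (\<lambda>k. s (vertical_index k))"
  unfolding halfline_positive_def
proof (intro allI impI)
  fix a :: "nat \<Rightarrow> real" and D :: nat
  assume nonneg: "\<forall>t\<ge>0. 0 \<le> (\<Sum>k\<le>D. a k * t ^ k)"
  obtain c where "c \<in> C"
    using assms(1) by blast
  show "0 \<le> (\<Sum>k\<le>D. a k * s (vertical_index k))"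
    by (rule pos_preserver_monom_comb_nonneg[OF assms(2) lift_mem_cylinder[OF \<open>c \<in> C\<close> order_refl]])
      (use nonneg in \<open>auto simp: monom_eval_vertical_index lift_add_mem_cylinder\<close>)
qed

lemma pos_preserver_cylinder_coordinate_square:
  fixes C :: "(real^'n::finite) set"
  assumes "compact C" and "C \<noteq> {}" and pp: "pos_preserver (cylinder C) (Dop s)"
  shows "s (unit_index (Some j) + unit_index (Some j)) = 0"
proof -
  let ?e = "unit_index (Some j)"
  have "continuous_on C (\<lambda>c. c $ j)"
    by (intro continuous_intros)
  then obtain cmax cmin where "cmax \<in> C" "cmin \<in> C"
    and bounds: "\<And>c. c \<in> C \<Longrightarrow> cmin $ j \<le> c $ j \<and> c $ j \<le> cmax $ j"
    using continuous_attains_sup[OF assms(1,2)] continuous_attains_inf[OF assms(1,2)] by meson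
  define w where "w = cmax $ j - cmin $ j"
  have range: "cmin $ j \<le> c $ j + z $ Some j \<and> c $ j + z $ Some j \<le> cmax $ j"
    if "lift c 0 + z \<in> cylinder C" for c z
    using bounds[of "c + (\<chi> i. z $ Some i)"] that by (simp add: lift_add_mem_cylinder)
  txt \<open>Seen from the points of \<open>C\<close> where \<open>x\<^sub>j\<close> is maximal resp. minimal, \<open>x\<^sub>j\<close> ranges over
    \<open>[-w, 0]\<close> resp. \<open>[0, w]\<close>, so that \<open>x\<^sub>j\<^sup>2 \<le> -w x\<^sub>j\<close> resp. \<open>x\<^sub>j\<^sup>2 \<le> w x\<^sub>j\<close> there.\<close>
  have "0 \<le> (- w) * s ?e + (- 1) * s (?e + ?e)"
  proof (rule pos_preserver_linear_quadratic_nonneg[OF pp lift_mem_cylinder[OF \<open>cmax \<in> C\<close> order_refl]])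
    fix z assume "lift cmax 0 + z \<in> cylinder C"
    then have "0 \<le> - z $ Some j" and "0 \<le> w + z $ Some j"
      using range[of cmax z] by (auto simp: w_def)
    then have "0 \<le> (- z $ Some j) * (w + z $ Some j)"
      by (rule mult_nonneg_nonneg)
    then show "0 \<le> (- w) * z $ Some j + (- 1) * (z $ Some j)\<^sup>2"
      by (simp add: power2_eq_square algebra_simps)
  qed
  moreover have "0 \<le> w * s ?e + (- 1) * s (?e + ?e)"
  proof (rule pos_preserver_linear_quadratic_nonneg[OF pp lift_mem_cylinder[OF \<open>cmin \<in> C\<close> order_refl]])
    fix z assume "lift cmin 0 + z \<in> cylinder C"
    then have "0 \<le> z $ Some j" and "0 \<le> w - z $ Some j"
      using range[of cmin z] by (auto simp: w_def)
    then have "0 \<le> z $ Some j * (w - z $ Some j)"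
      by (rule mult_nonneg_nonneg)
    then show "0 \<le> w * z $ Some j + (- 1) * (z $ Some j)\<^sup>2"
      by (simp add: power2_eq_square algebra_simps)
  qed
  moreover have "0 \<le> s (?e + ?e)"
    using pos_preserver_square_nonneg[OF pp lift_mem_cylinder[OF \<open>cmin \<in> C\<close> order_refl], of 1 ?e 0]
    by simp
  ultimately show ?thesis
    by linarith
qed

lemma pos_preserver_cylinder_vanish_off_axis:
  fixes C :: "(real^'n::finite) set"
  assumes "compact C" and "C \<noteq> {}" and pp: "pos_preserver (cylinder C) (Dop s)"
    and "\<alpha> (Some j) \<noteq> 0"
  shows "s \<alpha> = 0"
proof -
  let ?e = "unit_index (Some j)"
  obtain c where "c \<in> C"
    using assms(2) by blast
  note square = pos_preserver_square_nonneg[OF pp lift_mem_cylinder[OF \<open>c \<in> C\<close> order_refl], of _ ?e]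
  have "s (?e + \<beta>) = 0" for \<beta>
    using cross_term_zero_if_quadratic_form_nonneg[OF square]
      pos_preserver_cylinder_coordinate_square[OF assms(1-3)] by blast
  moreover have "\<alpha> = ?e + (\<alpha> - ?e)"
    using assms(4) by (auto simp: fun_eq_iff unit_index_def)
  ultimately show ?thesis
    by metis
qed

lemma vertical_index_eq: "\<forall>j. \<alpha> (Some j) = 0 \<Longrightarrow> vertical_index (\<alpha> None) = \<alpha>"
  by (auto simp: vertical_index_def fun_eq_iff split: option.splits)

lemma monom_eval_lift_0:
  "monom_eval \<alpha> (lift 0 t) = (if \<forall>j. \<alpha> (Some j) = 0 then t ^ \<alpha> None else 0)"
proof (cases "\<forall>j. \<alpha> (Some j) = 0")
  case True
  then show ?thesis
    by (metis monom_eval_vertical_index lift_nth(1) vertical_index_eq[OF True])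
next
  case False
  then obtain j where "\<alpha> (Some j) \<noteq> 0"
    by blast
  then have "monom_eval \<alpha> (lift 0 t) = 0"
    unfolding monom_eval_def by (intro prod_zero bexI[of _ "Some j"]) auto
  then show ?thesis
    by (simp only: False if_False)
qed

lemma borel_measurable_lift_0: "lift (0 :: real^'n::finite) \<in> borel_measurable borel"
proof -
  define u :: "real^'n option" where "u = lift 0 1"
  have "lift 0 = (\<lambda>t. t *\<^sub>R u)"
    by (simp add: u_def fun_eq_iff vec_eq_iff lift_def split: option.splits)
  moreover have "(\<lambda>t. t *\<^sub>R u) \<in> borel_measurable borel"
    by (intro borel_measurable_continuous_onI continuous_intros)
  ultimately show ?thesis
    by simp
qed

lemma emeasure_distr_lift_0_outside_ray:
  assumes sets: "sets \<nu> = sets borel" and nonneg: "AE t in \<nu>. 0 \<le> t"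
  shows "emeasure (distr \<nu> borel (lift (0 :: real^'n::finite))) (UNIV - vertical_ray) = 0"
proof -
  have measurable: "lift (0 :: real^'n) \<in> measurable \<nu> borel"
    using borel_measurable_lift_0 unfolding measurable_cong_sets[OF sets refl] .
  have "lift (0 :: real^'n) -` (UNIV - vertical_ray) \<inter> space \<nu> = {t \<in> space \<nu>. \<not> 0 \<le> t}"
    by (auto simp: vertical_ray_def)
  moreover have "UNIV - vertical_ray \<in> sets (borel :: (real^'n option) measure)"
    by (intro borel_open open_Diff open_UNIV closed_vertical_ray)
  ultimately have "emeasure (distr \<nu> borel (lift (0 :: real^'n))) (UNIV - vertical_ray)
                     = emeasure \<nu> {t \<in> space \<nu>. \<not> 0 \<le> t}"
    by (simp add: emeasure_distr[OF measurable])
  also have "\<dots> = 0"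
    using nonneg sets by (subst (asm) AE_iff_measurable) auto
  finally show ?thesis .
qed

lemma moment_seq_vertical_ray:
  fixes s :: "('n::finite option \<Rightarrow> nat) \<Rightarrow> real" and \<nu> :: "real measure"
  assumes sets: "sets \<nu> = sets borel" and nonneg: "AE t in \<nu>. 0 \<le> t"
    and integrable: "\<And>k. integrable \<nu> (\<lambda>t. t ^ k)"
    and axis: "\<And>k. s (vertical_index k) = (\<integral>t. t ^ k \<partial>\<nu>)"
    and off_axis: "\<And>\<alpha> j. \<alpha> (Some j) \<noteq> 0 \<Longrightarrow> s \<alpha> = 0"
  shows "moment_seq vertical_ray s"
proof -
  define \<mu> :: "(real^'n option) measure" where "\<mu> = distr \<nu> borel (lift 0)"
  have measurable: "lift (0 :: real^'n) \<in> measurable \<nu> borel"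
    using borel_measurable_lift_0 unfolding measurable_cong_sets[OF sets refl] .
  show ?thesis
    unfolding moment_seq_def
  proof (intro exI[of _ \<mu>] conjI allI)
    show "sets \<mu> = sets borel"
      by (simp add: \<mu>_def)
    show "emeasure \<mu> (UNIV - vertical_ray) = 0"
      unfolding \<mu>_def by (rule emeasure_distr_lift_0_outside_ray[OF sets nonneg])
    fix \<alpha> :: "'n option \<Rightarrow> nat"
    show "integrable \<mu> (monom_eval \<alpha>)"
      unfolding \<mu>_def integrable_distr_eq[OF measurable borel_measurable_monom_eval]
    proof (cases "\<forall>j. \<alpha> (Some j) = 0")
      case True
      then show "integrable \<nu> (\<lambda>t. monom_eval \<alpha> (lift 0 t))"
        using integrable by (simp add: monom_eval_lift_0)
    next
      case False
      then show "integrable \<nu> (\<lambda>t. monom_eval \<alpha> (lift 0 t))"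
        by (simp only: monom_eval_lift_0 False if_False integrable_zero)
    qed
    have "(\<integral>x. monom_eval \<alpha> x \<partial>\<mu>) = (\<integral>t. monom_eval \<alpha> (lift 0 t) \<partial>\<nu>)"
      unfolding \<mu>_def by (rule integral_distr[OF measurable borel_measurable_monom_eval])
    also have "\<dots> = s \<alpha>"
    proof (cases "\<forall>j. \<alpha> (Some j) = 0")
      case True
      then show ?thesis
        using axis[of "\<alpha> None"] by (simp add: monom_eval_lift_0 vertical_index_eq[OF True])
    next
      case False
      then obtain j where "\<alpha> (Some j) \<noteq> 0"
        by blast
      then show ?thesis
        by (simp only: monom_eval_lift_0 False if_False off_axis integral_zero)
    qed
    finally show "s \<alpha> = (\<integral>x. monom_eval \<alpha> x \<partial>\<mu>)"
      by (rule sym)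
  qed
qed

theorem theorem4p17:
  fixes C :: "(real^'n) set" and s :: "('n option \<Rightarrow> nat) \<Rightarrow> real"
  assumes "C \<noteq> {}" and "compact C"
  defines "K \<equiv> {x :: real^('n option). (\<chi> i. x $ Some i) \<in> C \<and> x $ None \<ge> 0}"
  shows "pos_preserver K (Dop s) \<longleftrightarrow> moment_seq (Ksharp K) s"
proof -
  have K: "K = cylinder C"
    by (simp add: K_def cylinder_def)
  have Ksharp: "Ksharp K = vertical_ray"
    unfolding K by (rule Ksharp_cylinder[OF assms(2,1)])
  show ?thesis
  proof
    assume "pos_preserver K (Dop s)"
    then have pp: "pos_preserver (cylinder C) (Dop s)"
      by (simp add: K)
    obtain \<nu> :: "real measure" where "sets \<nu> = sets borel" "AE t in \<nu>. 0 \<le> t"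
      "\<And>k. integrable \<nu> (\<lambda>t. t ^ k)" "\<And>k. (\<integral>t. t ^ k \<partial>\<nu>) = s (vertical_index k)"
      using halfline_positive_stieltjes[OF pos_preserver_cylinder_halfline_positive[OF assms(1) pp]]
      by blast
    then show "moment_seq (Ksharp K) s"
      unfolding Ksharp
      by (intro moment_seq_vertical_ray pos_preserver_cylinder_vanish_off_axis[OF assms(2,1) pp]) auto
  next
    assume "moment_seq (Ksharp K) s"
    then show "pos_preserver K (Dop s)"
      by (rule moment_seq_imp_pos_preserver) (simp_all add: Ksharp closed_vertical_ray)
  qed
qed

end
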